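(* Let $(\mathbf{x}_i,y_i)_{i=1}^n\subset\mathbb{R}^d\times\{\pm1\}$ satisfy $\|\mathbf{x}_i\|\le 1$ for all $i$, and suppose there are $\gamma>0$ and a unit vector $\mathbf{w}_*$ with $y_i\mathbf{x}_i^\top\mathbf{w}_*\ge\gamma$ for all $i$. Let $L(\mathbf{w})=\frac1n\sum_{i=1}^n\ln\big(1+\exp(-y_i\mathbf{x}_i^\top\mathbf{w})\big)$ and run gradient descent $\mathbf{w}_t=\mathbf{w}_{t-1}-\eta\nabla L(\mathbf{w}_{t-1})$, $t\ge1$, with an arbitrary constant stepsize $\eta>0$ and $\mathbf{w}_0=0$. Let $F(\mathbf{w}):=\frac1n\sum_{i=1}^n\exp(-y_i\mathbf{x}_i^\top\mathbf{w})$. Then: (1) For every integer $t\ge1$, \[\frac1t\sum_{k=0}^{t-1}L(\mathbf{w}_k)\le\frac{1+\ln^2(\gamma^2\eta t)+\eta^2/4}{\gamma^2\eta t}.\] (2) If $s\ge0$ is such that $L(\mathbf{w}_s)\le 1/\eta$, then $(L(\mathbf{w}_t))_{t\ge s}$ is non-increasing, and for every $t>s$, \[L(\mathbf{w}_t)\le\frac{2F(\mathbf{w}_s)+\ln^2(\gamma^2\eta(t-s))}{\gamma^2\eta(t-s)}.\] (3) Let $\tau:=\frac{60}{\gamma^2}\max\Big\{\eta,\ n,\ e,\ \frac{\eta+n}{\eta}\ln\frac{\eta+n}{\eta}\Big\}$. Then there exists an integer $0\le s\le\tau$ such that $L(\mathbf{w}_s)\le1/\eta$ and $F(\mathbf{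w}_s)\le1$.
   Context: Logistic regression with linearly separable data; $\eta$ may be arbitrarily large (no smoothness-based restriction on the stepsize). *)

theory Defs
  imports "HOL-Analysis.Analysis"
begin

text \<open>Logistic empirical risk: data points indexed by i < n (i.e. the paper's 1..n).\<close>
definition logistic_risk :: "nat \<Rightarrow> (nat \<Rightarrow> 'a::euclidean_space) \<Rightarrow> (nat \<Rightarrow> real) \<Rightarrow> 'a \<Rightarrow> real" where
  "logistic_risk n x y w = (1 / real n) * (\<Sum>i<n. ln (1 + exp (- (y i * (x i \<bullet> w)))))"

definition exp_risk :: "nat \<Rightarrow> (nat \<Rightarrow> 'a::euclidean_space) \<Rightarrow> (nat \<Rightarrow> real) \<Rightarrow> 'a \<Rightarrow> real" where
  "exp_risk n x y w = (1 / real n) * (\<Sum>i<n. exp (- (y i * (x i \<bullet> w))))"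

definition is_GD :: "('a::euclidean_space \<Rightarrow> real) \<Rightarrow> real \<Rightarrow> (nat \<Rightarrow> 'a) \<Rightarrow> bool" where
  "is_GD f eta w \<longleftrightarrow> w 0 = 0 \<and>
     (\<forall>t. \<exists>g. (f has_derivative (\<lambda>h. g \<bullet> h)) (at (w t)) \<and> w (Suc t) = w t - eta *\<^sub>R g)"

end

theory Submission
  imports Defs
begin

text \<open>Everything rests on two properties of the logistic loss \<open>\<ell>(m) = ln (1 + e\<^sup>-\<^sup>m)\<close> and its
  weight \<open>p(m) = -\<ell>'(m) = 1 / (1 + e\<^sup>m)\<close>: \<open>\<ell>\<close> is convex, and on steps of length at most 1 its
  curvature is bounded by \<open>p\<close> itself.  So the risk \<open>L\<close> has local curvature
  \<open>G(w) = mean of p \<le> L(w)\<close>, and once \<open>\<eta> L(w\<^sub>s) \<le> 1\<close> gradient descent decreases \<open>L\<close>; the usual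
  comparator argument against \<open>w\<^sub>s + (ln a / \<gamma>) w\<^sub>*\<close> then gives the rate (2).
  Before that phase one compares against \<open>u + \<eta>/(2\<gamma>) w\<^sub>*\<close> instead: since
  \<open>\<nabla>L(w) \<bullet> w\<^sub>* \<le> -\<gamma> G(w)\<close>, the extra component absorbs the second-order term
  \<open>\<eta>\<^sup>2 \<parallel>\<nabla>L\<parallel>\<^sup>2 \<le> \<eta>\<^sup>2 G\<close> for every \<open>\<eta>\<close>, which gives (1).  The same estimate bounds \<open>\<parallel>w\<^sub>t\<parallel>\<close>
  by \<open>O((ln (\<gamma>\<^sup>2\<eta>t) + \<eta>) / \<gamma>)\<close>, while the perceptron argument gives
  \<open>w\<^sub>t \<bullet> w\<^sub>* \<ge> \<eta>\<gamma> \<Sum>\<^sub>k\<^sub><\<^sub>t G(w\<^sub>k)\<close>.  Hence the sum of the \<open>G(w\<^sub>k)\<close> grows only logarithmically, and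
  before the stopping time some \<open>G(w\<^sub>k) \<le> 1 / (2 max n \<eta>)\<close>; then every weight is below
  \<open>1/2\<close>, all margins are nonnegative and \<open>L(w\<^sub>k) \<le> F(w\<^sub>k) \<le> 2 G(w\<^sub>k)\<close>, which is (3).\<close>

definition logistic_loss :: "real \<Rightarrow> real" where
  "logistic_loss m = ln (1 + exp (- m))"

definition logistic_weight :: "real \<Rightarrow> real" where
  "logistic_weight m = 1 / (1 + exp m)"

lemma one_add_exp_pos: "0 < 1 + exp (x :: real)"
  by (simp add: add_pos_pos)

lemma logistic_weight_pos: "0 < logistic_weight m"
  by (simp add: logistic_weight_def one_add_exp_pos)

lemma logistic_weight_less_one: "logistic_weight m < 1"
  by (simp add: logistic_weight_def divide_less_eq one_add_exp_pos)

lemma logistic_loss_le_exp: "logistic_loss m \<le> exp (- m)"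
  by (simp add: logistic_loss_def ln_add_one_self_le_self)

lemma logistic_weight_eq: "logistic_weight m = exp (- m) / (1 + exp (- m))"
  by (simp add: logistic_weight_def exp_minus field_simps one_add_exp_pos)

lemma logistic_weight_le_loss: "logistic_weight m \<le> logistic_loss m"
proof -
  have pos: "0 < 1 + exp (- m)"
    by (simp add: one_add_exp_pos)
  have "- ln (1 + exp (- m)) = ln (1 / (1 + exp (- m)))"
    using pos by (simp add: ln_div)
  also have "\<dots> \<le> 1 / (1 + exp (- m)) - 1"
    using pos by (intro ln_le_minus_one) simp
  also have "\<dots> = - logistic_weight m"
    using pos by (simp add: logistic_weight_eq field_simps)
  finally show ?thesis
    by (simp add: logistic_loss_def)
qed

lemma has_real_derivative_logistic_loss:
  "(logistic_loss has_real_derivative - logistic_weight m) (at m)"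
proof -
  have "(logistic_loss has_real_derivative 1 / (1 + exp (- m)) * (exp (- m) * - 1)) (at m)"
    unfolding logistic_loss_def
    by (rule derivative_eq_intros refl | simp add: one_add_exp_pos)+
  then show ?thesis
    by (simp add: logistic_weight_eq)
qed

lemma logistic_mixture_pos: "0 < 1 - logistic_weight m + logistic_weight m * exp (- d)"
  using logistic_weight_less_one[of m] logistic_weight_pos[of m]
  by (simp add: add_pos_nonneg)

lemma logistic_loss_add:
  "logistic_loss (m + d)
     = logistic_loss m + ln (1 - logistic_weight m + logistic_weight m * exp (- d))"
proof -
  let ?p = "logistic_weight m"
  have "1 + exp (- m) \<noteq> 0"
    using one_add_exp_pos[of "- m"] by simp
  then have "1 + exp (- m) * exp (- d) = (1 + exp (- m)) * (1 - ?p + ?p * exp (- d))"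
    unfolding logistic_weight_eq by (simp add: field_simps)
  then have "1 + exp (- (m + d)) = (1 + exp (- m)) * (1 - ?p + ?p * exp (- d))"
    by (simp add: exp_add[symmetric])
  then show ?thesis
    using logistic_mixture_pos[of m d] one_add_exp_pos[of "- m"]
    by (simp add: logistic_loss_def ln_mult)
qed

lemma exp_le_one_add_square:
  fixes u :: real
  assumes "\<bar>u\<bar> \<le> 1"
  shows "exp u \<le> 1 + u + u\<^sup>2"
proof (cases "0 \<le> u")
  case True
  then show ?thesis
    using exp_bound assms by simp
next
  case False
  have "exp u = 1 / exp (- u)"
    by (simp add: exp_minus divide_inverse)
  also have "\<dots> \<le> 1 / (1 - u)"
    using exp_ge_add_one_self[of "- u"] False by (intro divide_left_mono) auto
  also have "\<dots> \<le> 1 + u + u\<^sup>2"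
  proof -
    have "(1 + u + u\<^sup>2) * (1 - u) = 1 - u ^ 3"
      by (simp add: algebra_simps power2_eq_square power3_eq_cube)
    moreover have "u ^ 3 \<le> 0"
      using False by (simp add: power3_eq_cube mult_nonneg_nonpos)
    ultimately show ?thesis
      using False by (simp add: divide_le_eq)
  qed
  finally show ?thesis .
qed

lemma logistic_loss_add_le:
  assumes "\<bar>d\<bar> \<le> 1"
  shows "logistic_loss (m + d) \<le> logistic_loss m - logistic_weight m * d + logistic_weight m * d\<^sup>2"
proof -
  let ?p = "logistic_weight m"
  have "ln (1 - ?p + ?p * exp (- d)) \<le> (1 - ?p + ?p * exp (- d)) - 1"
    by (rule ln_le_minus_one[OF logistic_mixture_pos])
  also have "\<dots> = ?p * (exp (- d) - 1)"
    by (simp add: algebra_simps)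
  also have "\<dots> \<le> ?p * (- d + d\<^sup>2)"
    using exp_le_one_add_square[of "- d"] assms logistic_weight_pos[of m]
    by (intro mult_left_mono) auto
  finally show ?thesis
    unfolding logistic_loss_add[of m d] by (simp add: algebra_simps)
qed

lemma logistic_loss_add_ge: "logistic_loss m - logistic_weight m * d \<le> logistic_loss (m + d)"
proof -
  let ?p = "logistic_weight m"
  have "exp ((1 - ?p) *\<^sub>R 0 + ?p *\<^sub>R (- d)) \<le> (1 - ?p) * exp 0 + ?p * exp (- d)"
    using logistic_weight_pos[of m] logistic_weight_less_one[of m]
    by (intro convex_onD[OF exp_convex]) auto
  then have "- (?p * d) \<le> ln (1 - ?p + ?p * exp (- d))"
    by (simp add: ln_ge_iff[OF logistic_mixture_pos])
  then show ?thesis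
    by (simp add: logistic_loss_add)
qed

lemma logistic_weight_le_half:
  assumes "logistic_weight m \<le> 1 / 2"
  shows "0 \<le> m" and "exp (- m) \<le> 2 * logistic_weight m"
proof -
  have "1 \<le> exp m"
    using assms one_add_exp_pos[of m] by (simp add: logistic_weight_def divide_le_eq)
  then show "0 \<le> m"
    by simp
  have "1 / exp m = 2 / (2 * exp m)"
    by simp
  also have "\<dots> \<le> 2 / (1 + exp m)"
    using \<open>1 \<le> exp m\<close> one_add_exp_pos[of m]
    by (intro divide_left_mono) (auto intro!: mult_pos_pos)
  finally show "exp (- m) \<le> 2 * logistic_weight m"
    by (simp add: logistic_weight_def exp_minus divide_inverse)
qed

lemma mult_exp_neg_max_ln_le_one:
  fixes a :: real
  assumes "0 \<le> a"
  shows "a * exp (- max 0 (ln a)) \<le> 1"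
proof (cases "1 \<le> a")
  case True
  then show ?thesis
    by (simp add: exp_minus)
next
  case False
  then have "ln a \<le> 0"
    using assms by (cases "a = 0") auto
  then show ?thesis
    using False by simp
qed

lemma exists_le_of_sum_le:
  fixes f :: "nat \<Rightarrow> real"
  assumes "(\<Sum>k<t. f k) \<le> real t * b" and "0 < t"
  shows "\<exists>k<t. f k \<le> b"
proof (rule ccontr)
  assume "\<not> (\<exists>k<t. f k \<le> b)"
  then have "(\<Sum>k<t. b) < (\<Sum>k<t. f k)"
    using assms(2) by (intro sum_strict_mono) auto
  with assms(1) show False
    by simp
qed

lemma ln_60_le: "ln (60::real) \<le> 6"
proof -
  have "(2::real) ^ 6 \<le> exp 1 ^ 6"
    using exp_ge_add_one_self[of 1] by (intro power_mono) auto
  also have "\<dots> = exp 6"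
    by (simp add: exp_of_nat_mult[symmetric])
  finally show ?thesis
    using ln_le_cancel_iff[of 60 "exp 6"] by simp
qed

lemma mult_ln_le_mult_ln_add:
  fixes r M :: real
  assumes "1 \<le> r" and "0 < M"
  shows "r * ln M \<le> r * ln r + M"
proof -
  have "ln (M / r) \<le> M / r"
    using ln_le_minus_one[of "M / r"] assms by simp
  then have "r * ln (M / r) \<le> M"
    using assms mult_left_mono[of "ln (M / r)" "M / r" r] by simp
  then show ?thesis
    using assms by (simp add: ln_div algebra_simps)
qed

lemma max_mult_ln_le:
  fixes \<eta> \<nu> M :: real
  assumes "1 \<le> \<eta>" "1 \<le> \<nu>" "1 \<le> M"
    and "((\<eta> + \<nu>) / \<eta>) * ln ((\<eta> + \<nu>) / \<eta>) \<le> M"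
  shows "max \<nu> \<eta> * ln M \<le> 2 * (\<eta> * M)"
proof -
  define r where "r = (\<eta> + \<nu>) / \<eta>"
  have "1 \<le> r" and "max \<nu> \<eta> \<le> \<eta> * r"
    using assms(1,2) by (simp_all add: r_def field_simps)
  then have "max \<nu> \<eta> * ln M \<le> \<eta> * (r * ln M)"
    using assms(3) by (simp add: mult_right_mono mult.assoc[symmetric])
  also have "\<dots> \<le> \<eta> * (2 * M)"
    using mult_ln_le_mult_ln_add[of r M] \<open>1 \<le> r\<close> assms(1,3,4)
    unfolding r_def[symmetric] by (intro mult_left_mono) auto
  finally show ?thesis
    by simp
qed

text \<open>The arithmetic behind the constant \<open>60\<close>: \<open>\<nu>\<close> stands for \<open>n\<close>, \<open>M\<close> for the maximum
  defining the stopping time, and \<open>a = \<gamma>\<^sup>2\<eta>t\<close> for that time \<open>t\<close>.\<close>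
lemma stopping_time_arith:
  fixes \<eta> \<nu> M a :: real
  assumes "1 \<le> \<eta>" "1 \<le> \<nu>" "\<eta> \<le> M" "\<nu> \<le> M" "exp 1 \<le> M"
    and "((\<eta> + \<nu>) / \<eta>) * ln ((\<eta> + \<nu>) / \<eta>) \<le> M"
    and "59 * \<eta> * M \<le> a" "a \<le> 60 * \<eta> * M"
  shows "2 * max \<nu> \<eta> * (2 * ln a + \<eta> + 2) \<le> a"
proof -
  define K where "K = max \<nu> \<eta>"
  have M2: "2 \<le> M"
    using assms(5) exp_ge_add_one_self[of 1] by linarith
  have K: "1 \<le> K" "K \<le> M"
    using assms(1-4) by (auto simp: K_def)
  have "0 < a"
    using assms(1,7) M2 by (smt (verit) mult_pos_pos)
  then have "ln a \<le> ln (60 * \<eta> * M)"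
    using assms(8) by (simp add: ln_le_cancel_iff order_less_le_trans[OF _ assms(8)])
  also have "\<dots> = ln 60 + ln \<eta> + ln M"
    using assms(1) M2 by (simp add: ln_mult)
  also have "\<dots> \<le> 5 + \<eta> + ln M"
    using ln_60_le ln_le_minus_one[of \<eta>] assms(1) by simp
  finally have "2 * K * (2 * ln a + \<eta> + 2) \<le> 2 * K * (2 * (5 + \<eta> + ln M) + \<eta> + 2)"
    using K by simp
  also have "\<dots> = 24 * K + 6 * (K * \<eta>) + 4 * (K * ln M)"
    by (simp add: algebra_simps)
  also have "\<dots> \<le> 24 * (\<eta> * M) + 6 * (\<eta> * M) + 4 * (2 * (\<eta> * M))"
  proof -
    have "1 * M \<le> \<eta> * M"
      using M2 by (intro mult_right_mono[OF assms(1)]) simp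
    then have "K \<le> \<eta> * M"
      using K(2) by linarith
    moreover have "K * \<eta> \<le> \<eta> * M"
      using K assms(1) by (simp add: mult.commute mult_left_mono)
    moreover have "K * ln M \<le> 2 * (\<eta> * M)"
      unfolding K_def using max_mult_ln_le[OF assms(1,2) _ assms(6)] M2 by simp
    ultimately show ?thesis
      by linarith
  qed
  also have "\<dots> \<le> 59 * (\<eta> * M)"
    using assms(1) M2 by simp
  also have "\<dots> \<le> a"
    using assms(7) by (simp add: mult.assoc)
  finally show ?thesis
    unfolding K_def .
qed

lemma power2_norm_gradient_step:
  fixes v g u :: "'a::real_inner"
  shows "(norm (v - c *\<^sub>R g - u))\<^sup>2 = (norm (v - u))\<^sup>2 + 2 * c * (g \<bullet> (u - v)) + c\<^sup>2 * (norm g)\<^sup>2"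
proof -
  define a where "a = v - u"
  have "v - c *\<^sub>R g - u = a - c *\<^sub>R g" and "u - v = - a"
    by (simp_all add: a_def algebra_simps)
  then show ?thesis
    unfolding power2_norm_eq_inner
    by (simp add: inner_diff_left inner_diff_right inner_commute[of a g] algebra_simps power2_eq_square)
qed

locale logistic_data =
  fixes n :: nat and x :: "nat \<Rightarrow> 'a::euclidean_space" and y :: "nat \<Rightarrow> real"
  assumes n_pos: "n \<ge> 1"
    and labels: "\<forall>i<n. y i \<in> {-1, 1}"
    and bounded: "\<forall>i<n. norm (x i) \<le> 1"
begin

abbreviation "L \<equiv> logistic_risk n x y"
abbreviation "F \<equiv> exp_risk n x y"

definition margin_at :: "nat \<Rightarrow> 'a \<Rightarrow> real" where
  "margin_at i v = y i * (x i \<bullet> v)"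

definition grad :: "'a \<Rightarrow> 'a" where
  "grad v = - ((1 / real n) *\<^sub>R (\<Sum>i<n. (logistic_weight (margin_at i v) * y i) *\<^sub>R x i))"

definition avg_weight :: "'a \<Rightarrow> real" where
  "avg_weight v = (1 / real n) * (\<Sum>i<n. logistic_weight (margin_at i v))"

lemma n_gt_0: "0 < real n"
  using n_pos by simp

lemma L_eq: "L v = (1 / real n) * (\<Sum>i<n. logistic_loss (margin_at i v))"
  by (simp add: logistic_risk_def logistic_loss_def margin_at_def)

lemma F_eq: "F v = (1 / real n) * (\<Sum>i<n. exp (- margin_at i v))"
  by (simp add: exp_risk_def margin_at_def)

lemma margin_at_add [simp]: "margin_at i (u + v) = margin_at i u + margin_at i v"
  and margin_at_diff [simp]: "margin_at i (u - v) = margin_at i u - margin_at i v"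
  and margin_at_scaleR [simp]: "margin_at i (c *\<^sub>R v) = c * margin_at i v"
  and margin_at_zero [simp]: "margin_at i 0 = 0"
  by (simp_all add: margin_at_def inner_add_right inner_diff_right algebra_simps)

lemma abs_margin_at_le: "i < n \<Longrightarrow> \<bar>margin_at i z\<bar> \<le> norm z"
proof -
  assume i: "i < n"
  then have "\<bar>margin_at i z\<bar> = \<bar>x i \<bullet> z\<bar>"
    using labels by (auto simp: margin_at_def)
  also have "\<dots> \<le> norm (x i) * norm z"
    by (rule Cauchy_Schwarz_ineq2)
  also have "\<dots> \<le> norm z"
    using bounded i by (intro mult_left_le_one_le) auto
  finally show ?thesis .
qed

lemma inner_grad:
  "grad v \<bullet> z = - ((1 / real n) * (\<Sum>i<n. logistic_weight (margin_at i v) * margin_at i z))"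
  by (simp add: grad_def inner_sum_left margin_at_def algebra_simps)

lemma L_has_derivative: "(L has_derivative (\<lambda>h. grad v \<bullet> h)) (at v)"
proof -
  have "((\<lambda>v. logistic_loss (margin_at i v)) has_derivative
      (\<lambda>h. - logistic_weight (margin_at i v) * margin_at i h)) (at v)" for i
  proof -
    have "(margin_at i has_derivative margin_at i) (at v)"
      unfolding margin_at_def by (auto intro!: derivative_eq_intros)
    from has_derivative_compose[OF this
        has_field_derivative_imp_has_derivative[OF has_real_derivative_logistic_loss]]
    show ?thesis
      by (simp add: mult.commute)
  qed
  then have "((\<lambda>v. (1 / real n) * (\<Sum>i<n. logistic_loss (margin_at i v))) has_derivative
      (\<lambda>h. (1 / real n) * (\<Sum>i<n. - logistic_weight (margin_at i v) * margin_at i h))) (at v)"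
    by (intro has_derivative_mult_right has_derivative_sum)
  then show ?thesis
    by (simp add: L_eq[abs_def] inner_grad sum_negf)
qed

lemma avg_weight_nonneg: "0 \<le> avg_weight v"
  unfolding avg_weight_def using logistic_weight_pos
  by (intro mult_nonneg_nonneg sum_nonneg) (auto intro: less_imp_le)

lemma avg_weight_le_one: "avg_weight v \<le> 1"
proof -
  have "(\<Sum>i<n. logistic_weight (margin_at i v)) \<le> (\<Sum>i<n. 1)"
    using logistic_weight_less_one by (intro sum_mono) (auto intro: less_imp_le)
  then show ?thesis
    unfolding avg_weight_def using n_gt_0 by (simp add: divide_simps)
qed

lemma average_mono:
  "(\<And>i. i < n \<Longrightarrow> f i \<le> g i) \<Longrightarrow> (1 / real n) * (\<Sum>i<n. f i) \<le> (1 / real n) * (\<Sum>i<n. g i)"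
  using n_gt_0 by (intro mult_left_mono sum_mono) auto

lemma avg_weight_le_L: "avg_weight v \<le> L v"
  unfolding avg_weight_def L_eq by (intro average_mono logistic_weight_le_loss)

lemma L_le_F: "L v \<le> F v"
  unfolding F_eq L_eq by (intro average_mono logistic_loss_le_exp)

lemma L_nonneg: "0 \<le> L v"
  using avg_weight_nonneg avg_weight_le_L order_trans by blast

lemma L_zero: "L 0 = ln 2"
  using n_gt_0 by (simp add: L_eq logistic_loss_def)

lemma F_zero: "F 0 = 1"
  using n_gt_0 by (simp add: F_eq)

lemma norm_grad_le: "norm (grad v) \<le> avg_weight v"
proof -
  have "norm (\<Sum>i<n. (logistic_weight (margin_at i v) * y i) *\<^sub>R x i)
      \<le> (\<Sum>i<n. norm ((logistic_weight (margin_at i v) * y i) *\<^sub>R x i))"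
    by (rule norm_sum)
  also have "\<dots> \<le> (\<Sum>i<n. logistic_weight (margin_at i v))"
  proof (rule sum_mono)
    fix i assume "i \<in> {..<n}"
    then have "\<bar>y i\<bar> = 1" "norm (x i) \<le> 1"
      using labels bounded by auto
    then show "norm ((logistic_weight (margin_at i v) * y i) *\<^sub>R x i) \<le> logistic_weight (margin_at i v)"
      using logistic_weight_pos[of "margin_at i v"]
      by (simp add: abs_mult mult_left_le)
  qed
  finally show ?thesis
    unfolding grad_def avg_weight_def norm_minus_cancel norm_scaleR using n_gt_0
    by (simp add: divide_right_mono)
qed

lemma L_ge_tangent: "L v + grad v \<bullet> (u - v) \<le> L u"
proof -
  have "L v + grad v \<bullet> (u - v) = (1 / real n) *
      (\<Sum>i<n. logistic_loss (margin_at i v) - logistic_weight (margin_at i v) * margin_at i (u - v))"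
    unfolding L_eq inner_grad sum_subtractf by (simp add: right_diff_distrib)
  also have "\<dots> \<le> L u"
    unfolding L_eq using logistic_loss_add_ge[of "margin_at i v" "margin_at i (u - v)" for i]
    by (intro average_mono) simp
  finally show ?thesis .
qed

text \<open>A local quadratic upper bound whose curvature is \<open>G(v)\<close> rather than a global
  smoothness constant; this is what allows arbitrarily large stepsizes.\<close>
lemma L_add_le:
  assumes "norm h \<le> 1"
  shows "L (v + h) \<le> L v + grad v \<bullet> h + avg_weight v * (norm h)\<^sup>2"
proof -
  have "L (v + h) \<le> (1 / real n) * (\<Sum>i<n. logistic_loss (margin_at i v)
      - logistic_weight (margin_at i v) * margin_at i h + logistic_weight (margin_at i v) * (norm h)\<^sup>2)"
    unfolding L_eq
  proof (rule average_mono)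
    fix i assume i: "i < n"
    let ?m = "margin_at i v" and ?d = "margin_at i h"
    have "\<bar>?d\<bar> \<le> norm h"
      using abs_margin_at_le[OF i] .
    then have "logistic_loss (margin_at i (v + h))
        \<le> logistic_loss ?m - logistic_weight ?m * ?d + logistic_weight ?m * ?d\<^sup>2"
      using logistic_loss_add_le[of ?d ?m] assms by (simp add: add.commute)
    moreover have "?d\<^sup>2 \<le> (norm h)\<^sup>2"
      using \<open>\<bar>?d\<bar> \<le> norm h\<close> by (metis abs_ge_zero power2_abs power_mono)
    then have "logistic_weight ?m * ?d\<^sup>2 \<le> logistic_weight ?m * (norm h)\<^sup>2"
      using logistic_weight_pos[of ?m] by (simp add: mult_left_mono)
    ultimately show "logistic_loss (margin_at i (v + h))
        \<le> logistic_loss ?m - logistic_weight ?m * ?d + logistic_weight ?m * (norm h)\<^sup>2"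
      by linarith
  qed
  also have "\<dots> = L v + grad v \<bullet> h + avg_weight v * (norm h)\<^sup>2"
    unfolding L_eq inner_grad avg_weight_def sum.distrib sum_subtractf sum_distrib_right[symmetric]
    by (simp add: algebra_simps)
  finally show ?thesis .
qed

lemma L_gradient_step_le:
  assumes "0 \<le> \<eta>" and "\<eta> * avg_weight v \<le> 1"
  shows "L (v - \<eta> *\<^sub>R grad v) \<le> L v"
proof -
  let ?g = "grad v"
  have "norm (\<eta> *\<^sub>R ?g) \<le> \<eta> * avg_weight v"
    using assms(1) norm_grad_le by (simp add: mult_left_mono)
  then have "L (v + - (\<eta> *\<^sub>R ?g)) \<le> L v + ?g \<bullet> (- (\<eta> *\<^sub>R ?g)) + avg_weight v * (norm (\<eta> *\<^sub>R ?g))\<^sup>2"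
    using assms(2) L_add_le[of "- (\<eta> *\<^sub>R ?g)" v] by simp
  also have "\<dots> = L v - \<eta> * (norm ?g)\<^sup>2 * (1 - \<eta> * avg_weight v)"
    by (simp add: dot_square_norm power_mult_distrib algebra_simps power2_eq_square)
  also have "\<dots> \<le> L v"
    using assms by simp
  finally show ?thesis
    by simp
qed

lemma F_le_if_avg_weight_small:
  assumes "avg_weight v \<le> 1 / (2 * real n)"
  shows "F v \<le> 1" and "F v \<le> 2 * avg_weight v"
proof -
  have half: "logistic_weight (margin_at i v) \<le> 1 / 2" if "i < n" for i
  proof -
    have "logistic_weight (margin_at i v) \<le> (\<Sum>j<n. logistic_weight (margin_at j v))"
      using that logistic_weight_pos by (intro member_le_sum) (auto intro: less_imp_le)
    also have "\<dots> = real n * avg_weight v"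
      using n_gt_0 by (simp add: avg_weight_def)
    also have "\<dots> \<le> 1 / 2"
      using assms n_gt_0 by (simp add: field_simps)
    finally show ?thesis .
  qed
  have "F v \<le> (1 / real n) * (\<Sum>i<n. 1)"
    unfolding F_eq using logistic_weight_le_half(1)[OF half] by (intro average_mono) simp
  then show "F v \<le> 1"
    using n_gt_0 by simp
  have "F v \<le> (1 / real n) * (\<Sum>i<n. 2 * logistic_weight (margin_at i v))"
    unfolding F_eq using logistic_weight_le_half(2)[OF half] by (intro average_mono)
  then show "F v \<le> 2 * avg_weight v"
    by (simp add: avg_weight_def sum_distrib_left[symmetric])
qed

lemma stable_if_avg_weight_small:
  assumes "0 < \<eta>" and "avg_weight v \<le> 1 / (2 * max (real n) \<eta>)"
  shows "L v \<le> 1 / \<eta>" and "F v \<le> 1"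
proof -
  have "1 / (2 * max (real n) \<eta>) \<le> 1 / (2 * real n)" and "1 / (2 * max (real n) \<eta>) \<le> 1 / (2 * \<eta>)"
    using assms(1) n_gt_0 by (auto intro!: divide_left_mono)
  then have small_n: "avg_weight v \<le> 1 / (2 * real n)" and small_eta: "avg_weight v \<le> 1 / (2 * \<eta>)"
    using assms(2) by linarith+
  show "F v \<le> 1"
    using F_le_if_avg_weight_small(1)[OF small_n] .
  show "L v \<le> 1 / \<eta>"
    using L_le_F[of v] F_le_if_avg_weight_small(2)[OF small_n] small_eta by linarith
qed

end

locale separable_data = logistic_data n x y
  for n :: nat and x :: "nat \<Rightarrow> 'a::euclidean_space" and y :: "nat \<Rightarrow> real" +
  fixes \<gamma> :: real and wstar :: 'a
  assumes gamma_pos: "\<gamma> > 0"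
    and wstar_unit: "norm wstar = 1"
    and separates: "\<forall>i<n. y i * (x i \<bullet> wstar) \<ge> \<gamma>"
begin

lemma margin_at_wstar: "i < n \<Longrightarrow> \<gamma> \<le> margin_at i wstar"
  using separates by (simp add: margin_at_def)

lemma gamma_le_one: "\<gamma> \<le> 1"
  using margin_at_wstar[of 0] abs_margin_at_le[of 0 wstar] n_pos wstar_unit by simp

lemma inner_grad_wstar_le: "grad v \<bullet> wstar \<le> - \<gamma> * avg_weight v"
proof -
  have "\<gamma> * avg_weight v = (1 / real n) * (\<Sum>i<n. logistic_weight (margin_at i v) * \<gamma>)"
    by (simp add: avg_weight_def sum_distrib_left mult.commute)
  also have "\<dots> \<le> (1 / real n) * (\<Sum>i<n. logistic_weight (margin_at i v) * margin_at i wstar)"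
    using margin_at_wstar logistic_weight_pos by (intro average_mono mult_left_mono) (auto intro: less_imp_le)
  finally show ?thesis
    by (simp add: inner_grad)
qed

lemma F_add_scaleR_wstar_le:
  assumes "0 \<le> R"
  shows "F (v + R *\<^sub>R wstar) \<le> exp (- (\<gamma> * R)) * F v"
proof -
  have "F (v + R *\<^sub>R wstar) \<le> (1 / real n) * (\<Sum>i<n. exp (- (\<gamma> * R)) * exp (- margin_at i v))"
    unfolding F_eq
  proof (rule average_mono)
    fix i assume "i < n"
    then have "\<gamma> * R \<le> R * margin_at i wstar"
      using margin_at_wstar mult_right_mono[OF _ assms] by (metis mult.commute)
    then show "exp (- margin_at i (v + R *\<^sub>R wstar)) \<le> exp (- (\<gamma> * R)) * exp (- margin_at i v)"
      by (simp add: mult_exp_exp)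
  qed
  then show ?thesis
    by (simp add: F_eq sum_distrib_left[symmetric] algebra_simps)
qed

lemma L_add_scaleR_wstar_le: "0 \<le> R \<Longrightarrow> L (v + R *\<^sub>R wstar) \<le> exp (- (\<gamma> * R)) * F v"
  using L_le_F F_add_scaleR_wstar_le order_trans by blast

end

locale logistic_gd = separable_data n x y \<gamma> wstar
  for n :: nat and x :: "nat \<Rightarrow> 'a::euclidean_space" and y :: "nat \<Rightarrow> real"
    and \<gamma> :: real and wstar :: 'a +
  fixes \<eta> :: real and w :: "nat \<Rightarrow> 'a"
  assumes eta_pos: "\<eta> > 0"
    and GD: "is_GD (logistic_risk n x y) \<eta> w"
begin

lemma gd_zero: "w 0 = 0"
  using GD by (simp add: is_GD_def)

lemma gd_step: "w (Suc t) = w t - \<eta> *\<^sub>R grad (w t)"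
proof -
  obtain g where g: "(L has_derivative (\<lambda>h. g \<bullet> h)) (at (w t))" "w (Suc t) = w t - \<eta> *\<^sub>R g"
    using GD unfolding is_GD_def by blast
  have "(\<lambda>h. g \<bullet> h) = (\<lambda>h. grad (w t) \<bullet> h)"
    by (rule has_derivative_unique[OF g(1) L_has_derivative])
  then have "g \<bullet> (g - grad (w t)) = grad (w t) \<bullet> (g - grad (w t))"
    by metis
  then have "(g - grad (w t)) \<bullet> (g - grad (w t)) = 0"
    by (simp add: inner_diff_left)
  then have "g = grad (w t)"
    by simp
  with g(2) show ?thesis
    by simp
qed

lemma power2_norm_gd_step:
  "(norm (w (Suc k) - u))\<^sup>2
     = (norm (w k - u))\<^sup>2 + 2 * \<eta> * (grad (w k) \<bullet> (u - w k)) + \<eta>\<^sup>2 * (norm (grad (w k)))\<^sup>2"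
  unfolding gd_step by (rule power2_norm_gradient_step)

lemma power2_norm_grad_le: "(norm (grad v))\<^sup>2 \<le> avg_weight v"
proof -
  have "(norm (grad v))\<^sup>2 \<le> (avg_weight v)\<^sup>2"
    using norm_grad_le by (intro power_mono) auto
  also have "\<dots> \<le> avg_weight v"
    using avg_weight_nonneg avg_weight_le_one by (simp add: power2_eq_square mult_left_le)
  finally show ?thesis .
qed

text \<open>Comparing against \<open>u + \<eta>/(2\<gamma>) w\<^sub>*\<close> instead of \<open>u\<close>: the extra component along \<open>w\<^sub>*\<close>
  pays for the second-order term \<open>\<eta>\<^sup>2 \<parallel>\<nabla>L\<parallel>\<^sup>2\<close> however large \<open>\<eta>\<close> is.\<close>
lemma split_comparator_step:
  defines "c \<equiv> \<eta> / (2 * \<gamma>)"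
  shows "(norm (w (Suc k) - (u + c *\<^sub>R wstar)))\<^sup>2
    \<le> (norm (w k - (u + c *\<^sub>R wstar)))\<^sup>2 + 2 * \<eta> * (L u - L (w k))"
proof -
  let ?v = "w k" and ?g = "grad (w k)"
  have "c * (?g \<bullet> wstar) \<le> c * (- \<gamma> * avg_weight ?v)"
    using inner_grad_wstar_le eta_pos gamma_pos by (intro mult_left_mono) (auto simp: c_def)
  then have "?g \<bullet> (u + c *\<^sub>R wstar - ?v) \<le> L u - L ?v - \<eta> / 2 * avg_weight ?v"
    using L_ge_tangent[of ?v u] gamma_pos
    by (simp add: inner_add_right inner_diff_right c_def algebra_simps)
  then have "2 * \<eta> * (?g \<bullet> (u + c *\<^sub>R wstar - ?v)) \<le> 2 * \<eta> * (L u - L ?v - \<eta> / 2 * avg_weight ?v)"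
    using eta_pos by (intro mult_left_mono) auto
  also have "\<dots> = 2 * \<eta> * (L u - L ?v) - \<eta>\<^sup>2 * avg_weight ?v"
    by (simp add: algebra_simps power2_eq_square)
  moreover have "\<eta>\<^sup>2 * (norm ?g)\<^sup>2 \<le> \<eta>\<^sup>2 * avg_weight ?v"
    using power2_norm_grad_le by (simp add: mult_left_mono)
  ultimately show ?thesis
    using power2_norm_gd_step[of k "u + c *\<^sub>R wstar"] by simp
qed

lemma stable_step:
  assumes "L (w k) \<le> 1 / \<eta>"
  shows "(norm (w (Suc k) - u))\<^sup>2 \<le> (norm (w k - u))\<^sup>2 + 2 * \<eta> * L u - \<eta> * L (w k)"
proof -
  let ?v = "w k" and ?g = "grad (w k)"
  have "2 * \<eta> * (?g \<bullet> (u - ?v)) \<le> 2 * \<eta> * (L u - L ?v)"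
    using L_ge_tangent[of ?v u] eta_pos by (intro mult_left_mono) auto
  also have "\<dots> = 2 * \<eta> * L u - 2 * \<eta> * L ?v"
    by (simp add: algebra_simps)
  moreover have "\<eta>\<^sup>2 * (norm ?g)\<^sup>2 \<le> \<eta> * L ?v"
  proof -
    have GL: "\<eta> * avg_weight ?v \<le> \<eta> * L ?v"
      using avg_weight_le_L eta_pos by (simp add: mult_left_mono)
    have "\<eta> * L ?v \<le> 1"
      using assms eta_pos by (simp add: field_simps)
    then have "\<eta> * avg_weight ?v \<le> 1"
      using GL by linarith
    have "\<eta>\<^sup>2 * (norm ?g)\<^sup>2 \<le> (\<eta> * avg_weight ?v)\<^sup>2"
      unfolding power_mult_distrib using norm_grad_le
      by (intro mult_left_mono power_mono) auto
    also have "\<dots> \<le> \<eta> * avg_weight ?v"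
      using mult_left_le[OF \<open>\<eta> * avg_weight ?v \<le> 1\<close>] avg_weight_nonneg[of ?v] eta_pos
      by (simp add: power2_eq_square)
    finally show ?thesis
      using GL by linarith
  qed
  ultimately show ?thesis
    using power2_norm_gd_step[of k u] by linarith
qed

lemma L_Suc_le:
  assumes "L (w t) \<le> 1 / \<eta>"
  shows "L (w (Suc t)) \<le> L (w t)"
proof -
  have "\<eta> * avg_weight (w t) \<le> \<eta> * L (w t)"
    using avg_weight_le_L eta_pos by (simp add: mult_left_mono)
  also have "\<dots> \<le> 1"
    using assms eta_pos by (simp add: field_simps)
  finally show ?thesis
    unfolding gd_step using eta_pos by (intro L_gradient_step_le) auto
qed

lemma L_le_inverse_eta_after:
  assumes "L (w s) \<le> 1 / \<eta>" and "s \<le> t"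
  shows "L (w t) \<le> 1 / \<eta>"
  using assms(2)
proof (induction t rule: dec_induct)
  case (step t)
  then show ?case
    using L_Suc_le[of t] by linarith
qed (use assms(1) in simp)

lemma L_antimono_after:
  assumes "L (w s) \<le> 1 / \<eta>" and "s \<le> a" and "a \<le> b"
  shows "L (w b) \<le> L (w a)"
  using assms(3)
proof (induction b rule: dec_induct)
  case (step b)
  then have "s \<le> b"
    using assms(2) by simp
  then show ?case
    using L_Suc_le[OF L_le_inverse_eta_after[OF assms(1)]] step.IH by (meson order_trans)
qed simp

lemma weight_sum_le_inner_wstar: "\<eta> * \<gamma> * (\<Sum>k<t. avg_weight (w k)) \<le> w t \<bullet> wstar"
proof (induction t)
  case (Suc t)
  have "\<eta> * (grad (w t) \<bullet> wstar) \<le> \<eta> * (- \<gamma> * avg_weight (w t))"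
    using inner_grad_wstar_le eta_pos by (intro mult_left_mono) auto
  with Suc show ?case
    by (simp add: gd_step inner_diff_left algebra_simps)
qed (simp add: gd_zero)

lemma split_comparator_sum:
  defines "c \<equiv> \<eta> / (2 * \<gamma>)"
  shows "(norm (w t - (u + c *\<^sub>R wstar)))\<^sup>2 + 2 * \<eta> * (\<Sum>k<t. L (w k))
    \<le> (norm (u + c *\<^sub>R wstar))\<^sup>2 + 2 * \<eta> * real t * L u"
proof (induction t)
  case (Suc t)
  then show ?case
    using split_comparator_step[of t u] unfolding c_def by (simp add: algebra_simps)
next
  case 0
  show ?case
    by (simp only: gd_zero diff_0 norm_minus_cancel) simp
qed

lemma stable_sum:
  assumes "L (w s) \<le> 1 / \<eta>"
  shows "(norm (w (s + j) - u))\<^sup>2 + \<eta> * (\<Sum>k<j. L (w (s + k)))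
    \<le> (norm (w s - u))\<^sup>2 + 2 * \<eta> * real j * L u"
proof (induction j)
  case (Suc j)
  then show ?case
    using stable_step[OF L_le_inverse_eta_after[OF assms], of "s + j" u] by (simp add: algebra_simps)
qed simp

text \<open>The comparator \<open>(m / \<gamma>) w\<^sub>*\<close> with \<open>m = max 0 (ln (\<gamma>\<^sup>2\<eta>t))\<close> handles \<open>\<gamma>\<^sup>2\<eta>t < 1\<close>
  (including \<open>t = 0\<close>, where \<open>ln 0 = 0\<close>) and \<open>\<gamma>\<^sup>2\<eta>t \<ge> 1\<close> at once.\<close>
lemma split_comparator_bound:
  fixes t :: nat
  defines "m \<equiv> max 0 (ln (\<gamma>\<^sup>2 * \<eta> * real t))"
  defines "r \<equiv> (m + \<eta> / 2) / \<gamma>"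
  shows "(norm (w t - r *\<^sub>R wstar))\<^sup>2 + 2 * \<eta> * (\<Sum>k<t. L (w k)) \<le> r\<^sup>2 + 2 / \<gamma>\<^sup>2"
proof -
  have m0: "0 \<le> m" and r0: "0 \<le> r"
    using gamma_pos eta_pos by (simp_all add: m_def r_def)
  have "L (0 + (m / \<gamma>) *\<^sub>R wstar) \<le> exp (- m)"
    using L_add_scaleR_wstar_le[of "m / \<gamma>" 0] m0 gamma_pos by (simp add: F_zero)
  then have "2 * \<eta> * real t * L ((m / \<gamma>) *\<^sub>R wstar) \<le> 2 / \<gamma>\<^sup>2 * (\<gamma>\<^sup>2 * \<eta> * real t * exp (- m))"
    using eta_pos gamma_pos by (simp add: mult_left_mono)
  also have "\<dots> \<le> 2 / \<gamma>\<^sup>2"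
    unfolding m_def by (rule mult_left_le[OF mult_exp_neg_max_ln_le_one]) (use eta_pos in simp_all)
  finally have "2 * \<eta> * real t * L ((m / \<gamma>) *\<^sub>R wstar) \<le> 2 / \<gamma>\<^sup>2" .
  moreover have "(m / \<gamma>) *\<^sub>R wstar + (\<eta> / (2 * \<gamma>)) *\<^sub>R wstar = r *\<^sub>R wstar"
    by (simp add: r_def scaleR_add_left[symmetric] add_divide_distrib)
  ultimately show ?thesis
    using split_comparator_sum[of t "(m / \<gamma>) *\<^sub>R wstar"] r0 wstar_unit by simp
qed

theorem average_risk_bound:
  assumes "1 \<le> t"
  shows "(1 / real t) * (\<Sum>k<t. L (w k))
    \<le> (1 + (ln (\<gamma>\<^sup>2 * \<eta> * real t))\<^sup>2 + \<eta>\<^sup>2 / 4) / (\<gamma>\<^sup>2 * \<eta> * real t)"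
proof -
  define a where "a = \<gamma>\<^sup>2 * \<eta> * real t"
  define m where "m = max 0 (ln a)"
  have a0: "0 < a"
    using assms gamma_pos eta_pos by (simp add: a_def)
  have "2 * \<eta> * (\<Sum>k<t. L (w k)) \<le> ((m + \<eta> / 2) / \<gamma>)\<^sup>2 + 2 / \<gamma>\<^sup>2"
    using split_comparator_bound[of t] unfolding a_def[symmetric] m_def[symmetric]
    by (smt (verit) zero_le_power2)
  also have "\<dots> = ((m + \<eta> / 2)\<^sup>2 + 2) / \<gamma>\<^sup>2"
    using gamma_pos by (simp add: field_simps)
  also have "\<dots> \<le> (2 * (ln a)\<^sup>2 + \<eta>\<^sup>2 / 2 + 2) / \<gamma>\<^sup>2"
  proof -
    have "m\<^sup>2 \<le> (ln a)\<^sup>2"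
      by (simp add: m_def max_def)
    then have "(m + \<eta> / 2)\<^sup>2 \<le> 2 * (ln a)\<^sup>2 + \<eta>\<^sup>2 / 2"
      using sum_squares_ge_zero[of "m - \<eta> / 2" 0] by (simp add: power2_eq_square algebra_simps)
    then show ?thesis
      by (simp add: divide_right_mono)
  qed
  finally have "(\<Sum>k<t. L (w k)) \<le> (1 + (ln a)\<^sup>2 + \<eta>\<^sup>2 / 4) / (\<gamma>\<^sup>2 * \<eta>)"
    using eta_pos gamma_pos by (simp add: field_simps)
  then have "(1 / real t) * (\<Sum>k<t. L (w k)) \<le> (1 / real t) * ((1 + (ln a)\<^sup>2 + \<eta>\<^sup>2 / 4) / (\<gamma>\<^sup>2 * \<eta>))"
    using assms by (intro mult_left_mono) auto
  also have "\<dots> = (1 + (ln a)\<^sup>2 + \<eta>\<^sup>2 / 4) / a"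
    using assms by (simp add: a_def)
  finally show ?thesis
    unfolding a_def .
qed

theorem stable_risk_bound:
  assumes stable: "L (w s) \<le> 1 / \<eta>" and "s < t"
  shows "L (w t) \<le> (2 * F (w s) + (ln (\<gamma>\<^sup>2 * \<eta> * real (t - s)))\<^sup>2) / (\<gamma>\<^sup>2 * \<eta> * real (t - s))"
proof -
  define j where "j = t - s"
  define a where "a = \<gamma>\<^sup>2 * \<eta> * real j"
  define m where "m = max 0 (ln a)"
  have t: "t = s + j" and a0: "0 < a"
    using assms(2) gamma_pos eta_pos by (simp_all add: j_def a_def)
  have m0: "0 \<le> m"
    by (simp add: m_def)
  define u where "u = w s + (m / \<gamma>) *\<^sub>R wstar"
  have "real j * L (w t) \<le> (\<Sum>k<j. L (w (s + k)))"
    using L_antimono_after[OF stable, of "s + k" t for k] sum_mono[of "{..<j}" "\<lambda>_. L (w t)"] t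
    by simp
  then have "\<eta> * (real j * L (w t)) \<le> \<eta> * (\<Sum>k<j. L (w (s + k)))"
    using eta_pos by simp
  moreover have "(norm (w s - u))\<^sup>2 = (m / \<gamma>)\<^sup>2"
    using wstar_unit m0 gamma_pos by (simp add: u_def)
  ultimately have "\<eta> * (real j * L (w t)) \<le> (m / \<gamma>)\<^sup>2 + 2 * \<eta> * real j * L u"
    using stable_sum[OF stable, of j u, folded t] zero_le_power2[of "norm (w t - u)"] by linarith
  also have "\<dots> \<le> (m / \<gamma>)\<^sup>2 + 2 * \<eta> * real j * (exp (- m) * F (w s))"
    using L_add_scaleR_wstar_le[of "m / \<gamma>" "w s"] m0 gamma_pos eta_pos
    by (simp add: u_def mult_left_mono)
  finally have "a * L (w t) \<le> m\<^sup>2 + 2 * ((a * exp (- m)) * F (w s))"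
    using gamma_pos by (simp add: a_def field_simps power2_eq_square)
  moreover have "m\<^sup>2 \<le> (ln a)\<^sup>2"
    by (simp add: m_def max_def)
  moreover have "(a * exp (- m)) * F (w s) \<le> F (w s)"
    using mult_exp_neg_max_ln_le_one[of a] a0 L_nonneg[of "w s"] L_le_F[of "w s"]
    by (intro mult_left_le_one_le) (auto simp: m_def)
  ultimately have "a * L (w t) \<le> (ln a)\<^sup>2 + 2 * F (w s)"
    by linarith
  then have "L (w t) \<le> (2 * F (w s) + (ln a)\<^sup>2) / a"
    using a0 by (simp add: pos_le_divide_eq mult.commute add.commute)
  then show ?thesis
    unfolding a_def j_def .
qed

lemma weight_sum_bound:
  fixes t :: nat
  defines "a \<equiv> \<gamma>\<^sup>2 * \<eta> * real t"
  assumes "1 \<le> a"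
  shows "\<gamma>\<^sup>2 * \<eta> * (\<Sum>k<t. avg_weight (w k)) \<le> 2 * ln a + \<eta> + 2"
proof -
  define r where "r = (ln a + \<eta> / 2) / \<gamma>"
  have r0: "0 \<le> r"
    using assms(2) gamma_pos eta_pos by (simp add: r_def)
  have "0 \<le> 2 * \<eta> * (\<Sum>k<t. L (w k))"
    using eta_pos L_nonneg by (simp add: sum_nonneg)
  then have "(norm (w t - r *\<^sub>R wstar))\<^sup>2 \<le> r\<^sup>2 + 2 / \<gamma>\<^sup>2"
    using split_comparator_bound[of t] assms(2) unfolding a_def[symmetric] r_def by simp
  also have "\<dots> \<le> r\<^sup>2 + (2 / \<gamma>)\<^sup>2 + 2 * r * (2 / \<gamma>)"
  proof -
    have "0 \<le> 2 * r * (2 / \<gamma>)" and "2 / \<gamma>\<^sup>2 \<le> (2 / \<gamma>)\<^sup>2"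
      using r0 gamma_pos by (simp_all add: power_divide divide_right_mono)
    then show ?thesis
      by linarith
  qed
  also have "\<dots> = (r + 2 / \<gamma>)\<^sup>2"
    by (rule power2_sum[symmetric])
  finally have "norm (w t - r *\<^sub>R wstar) \<le> r + 2 / \<gamma>"
    by (rule power2_le_imp_le) (use r0 gamma_pos in simp)
  moreover have "w t \<bullet> wstar = (w t - r *\<^sub>R wstar) \<bullet> wstar + r"
    using wstar_unit by (simp add: inner_diff_left dot_square_norm)
  moreover have "(w t - r *\<^sub>R wstar) \<bullet> wstar \<le> norm (w t - r *\<^sub>R wstar)"
    using Cauchy_Schwarz_ineq2[of "w t - r *\<^sub>R wstar" wstar] wstar_unit by simp
  ultimately have "\<eta> * \<gamma> * (\<Sum>k<t. avg_weight (w k)) \<le> 2 * r + 2 / \<gamma>"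
    using weight_sum_le_inner_wstar[of t] by linarith
  then have "\<gamma> * (\<eta> * \<gamma> * (\<Sum>k<t. avg_weight (w k))) \<le> \<gamma> * (2 * r + 2 / \<gamma>)"
    using gamma_pos by simp
  moreover have "\<gamma> * (2 * r + 2 / \<gamma>) = 2 * ln a + \<eta> + 2"
    using gamma_pos by (simp add: r_def field_simps)
  ultimately show ?thesis
    by (simp add: power2_eq_square ac_simps)
qed

lemma exists_small_avg_weight:
  fixes t :: nat
  defines "a \<equiv> \<gamma>\<^sup>2 * \<eta> * real t"
  assumes "1 \<le> a" and "0 < K" and "2 * K * (2 * ln a + \<eta> + 2) \<le> a"
  shows "\<exists>k<t. avg_weight (w k) \<le> 1 / (2 * K)"
proof (rule exists_le_of_sum_le)
  let ?S = "\<Sum>k<t. avg_weight (w k)"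
  have "2 * K * (\<gamma>\<^sup>2 * \<eta> * ?S) \<le> 2 * K * (2 * ln a + \<eta> + 2)"
    using weight_sum_bound[of t] assms(2,3) unfolding a_def by (intro mult_left_mono) auto
  then have "(\<gamma>\<^sup>2 * \<eta>) * (2 * K * ?S) \<le> (\<gamma>\<^sup>2 * \<eta>) * real t"
    using assms(4) unfolding a_def by (simp add: ac_simps)
  then have "2 * K * ?S \<le> real t"
    using gamma_pos eta_pos by simp
  then show "?S \<le> real t * (1 / (2 * K))"
    using assms(3) by (simp add: field_simps)
  show "0 < t"
    using assms(2) unfolding a_def by (cases t) auto
qed

theorem exists_stable_iterate:
  "\<exists>s. real s \<le> (60 / \<gamma>\<^sup>2) * Max {\<eta>, real n, exp 1, ((\<eta> + real n) / \<eta>) * ln ((\<eta> + real n) / \<eta>)}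
     \<and> L (w s) \<le> 1 / \<eta> \<and> F (w s) \<le> 1"
proof -
  define M where "M = Max {\<eta>, real n, exp 1, ((\<eta> + real n) / \<eta>) * ln ((\<eta> + real n) / \<eta>)}"
  have M: "\<eta> \<le> M" "real n \<le> M" "exp 1 \<le> M" "((\<eta> + real n) / \<eta>) * ln ((\<eta> + real n) / \<eta>) \<le> M"
    by (simp_all add: M_def)
  have M2: "2 \<le> M"
    using M(3) exp_ge_add_one_self[of 1] by linarith
  have "ln (2::real) \<le> 1"
    using ln_le_minus_one[of 2] by simp
  show ?thesis
  proof (cases "ln 2 \<le> 1 / \<eta>")
    case True
    then show ?thesis
      using M2 gamma_pos by (intro exI[of _ 0]) (simp add: gd_zero L_zero F_zero M_def[symmetric])
  next
    case False
    have "1 < \<eta> * ln 2"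
      using False eta_pos by (simp add: field_simps)
    moreover have "\<eta> * ln 2 \<le> \<eta>"
      using \<open>ln 2 \<le> 1\<close> eta_pos by (simp add: mult_left_le)
    ultimately have eta1: "1 \<le> \<eta>"
      by linarith
    define \<tau> where "\<tau> = 60 * M / \<gamma>\<^sup>2"
    define t where "t = nat \<lfloor>\<tau>\<rfloor>"
    define a where "a = \<gamma>\<^sup>2 * \<eta> * real t"
    have "0 \<le> \<tau>"
      using M2 by (simp add: \<tau>_def)
    then have t: "real t \<le> 60 * M / \<gamma>\<^sup>2" "60 * M / \<gamma>\<^sup>2 - 1 \<le> real t"
      unfolding t_def \<tau>_def[symmetric] by linarith+
    have "a \<le> 60 * \<eta> * M"
      using mult_left_mono[OF t(1), of "\<gamma>\<^sup>2 * \<eta>"] gamma_pos eta_pos by (simp add: a_def field_simps)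
    moreover have "59 * \<eta> * M \<le> a"
    proof -
      have "\<gamma>\<^sup>2 * \<eta> * (60 * M / \<gamma>\<^sup>2 - 1) \<le> a"
        using mult_left_mono[OF t(2), of "\<gamma>\<^sup>2 * \<eta>"] gamma_pos eta_pos by (simp add: a_def)
      moreover have "\<gamma>\<^sup>2 * \<eta> * (60 * M / \<gamma>\<^sup>2 - 1) = 60 * \<eta> * M - \<gamma>\<^sup>2 * \<eta>"
        using gamma_pos by (simp add: field_simps)
      moreover have "\<gamma>\<^sup>2 * \<eta> \<le> 1 * \<eta>"
        using gamma_le_one gamma_pos eta_pos by (intro mult_right_mono) (auto simp: power_le_one)
      moreover have "1 * \<eta> \<le> \<eta> * M"
        using M2 eta_pos by simp
      ultimately show ?thesis
        by linarith
    qed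
    ultimately have arith: "2 * max (real n) \<eta> * (2 * ln a + \<eta> + 2) \<le> a"
      using stopping_time_arith[OF eta1 _ M] n_pos by simp
    have "1 * 2 \<le> \<eta> * M"
      using eta1 M2 by (intro mult_mono) auto
    then have "1 \<le> a"
      using \<open>59 * \<eta> * M \<le> a\<close> by linarith
    moreover have "0 < max (real n) \<eta>"
      using eta_pos by (simp add: less_max_iff_disj)
    ultimately obtain k where k: "k < t" "avg_weight (w k) \<le> 1 / (2 * max (real n) \<eta>)"
      using exists_small_avg_weight[of t "max (real n) \<eta>"] arith unfolding a_def by blast
    have "real k \<le> (60 / \<gamma>\<^sup>2) * M"
      using k(1) t(1) by simp
    then show ?thesis
      using stable_if_avg_weight_small[OF eta_pos k(2)] unfolding M_def by blast
  qed
qed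

end


theorem theorem1:
  fixes n :: nat and x :: "nat \<Rightarrow> 'a::euclidean_space" and y :: "nat \<Rightarrow> real"
    and \<gamma> \<eta> :: real and wstar :: 'a and w :: "nat \<Rightarrow> 'a"
  assumes n_pos: "n \<ge> 1"
    and labels: "\<forall>i<n. y i \<in> {-1, 1}"
    and bounded: "\<forall>i<n. norm (x i) \<le> 1"
    and gamma_pos: "\<gamma> > 0"
    and wstar_unit: "norm wstar = 1"
    and margin: "\<forall>i<n. y i * (x i \<bullet> wstar) \<ge> \<gamma>"
    and eta_pos: "\<eta> > 0"
    and GD: "is_GD (logistic_risk n x y) \<eta> w"
  shows
    "(\<forall>t::nat. t \<ge> 1 \<longrightarrow>
        (1 / real t) * (\<Sum>k<t. logistic_risk n x y (w k))
          \<le> (1 + (ln (\<gamma>^2 * \<eta> * real t))^2 + \<eta>^2 / 4) / (\<gamma>^2 * \<eta> * real t))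
     \<and> (\<forall>s::nat. logistic_risk n x y (w s) \<le> 1 / \<eta> \<longrightarrow>
        (\<forall>t\<ge>s. logistic_risk n x y (w (Suc t)) \<le> logistic_risk n x y (w t)) \<and>
        (\<forall>t>s. logistic_risk n x y (w t)
           \<le> (2 * exp_risk n x y (w s) + (ln (\<gamma>^2 * \<eta> * real (t - s)))^2)
               / (\<gamma>^2 * \<eta> * real (t - s))))
     \<and> (\<exists>s::nat. real s \<le> (60 / \<gamma>^2) * Max {\<eta>, real n, exp 1,
                   ((\<eta> + real n) / \<eta>) * ln ((\<eta> + real n) / \<eta>)}
           \<and> logistic_risk n x y (w s) \<le> 1 / \<eta> \<and> exp_risk n x y (w s) \<le> 1)"
proof -
  interpret logistic_gd n x y \<gamma> wstar \<eta> w
    using assms by unfold_locales auto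
  have descent: "L (w (Suc t)) \<le> L (w t)" if "L (w s) \<le> 1 / \<eta>" and "s \<le> t" for s t
    using L_Suc_le L_le_inverse_eta_after that by blast
  show ?thesis
    using average_risk_bound descent stable_risk_bound exists_stable_iterate by blast
qed

end
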